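(* Fix positive constants $P_a$, $P_J^{\max}$, $G_{aw,f}$, $G_{aw,s}$, $L_{aw}$, $\sigma_w^2$, and fixed realizations $|\tilde h_{aw,f}|^2>0$, $|\tilde h_{aw,s}|^2>0$ of the fading power gains. Let $P_J$ be a random variable uniformly distributed on $[0,P_J^{\max}]$. Define $$T_w^{\mathbb H_0}=P_J G_{aw,s}L_{aw}|\tilde h_{aw,s}|^2+\sigma_w^2,\qquad T_w^{\mathbb H_1}=P_aG_{aw,f}L_{aw}|\tilde h_{aw,f}|^2+P_J G_{aw,s}L_{aw}|\tilde h_{aw,s}|^2+\sigma_w^2 .$$ For a threshold $\tau\in\mathbb R$, Willie decides $\mathbb H_1$ if his statistic exceeds $\tau$ and $\mathbb H_0$ otherwise; let $P_{\rm FA}(\tau)=\Pr(T_w^{\mathbb H_0}>\tau)$, $P_{\rm MD}(\tau)=\Pr(T_w^{\mathbb H_1}<\tau)$ (probabilities over $P_J$), and $P_{e,w}(\tau)=P_{\rm FA}(\tau)+P_{\rm MD}(\tau)$. Set $\lambda_1=P_J^{\max}G_{aw,s}L_{aw}|\tilde h_{aw,s}|^2+\sigma_w^2$ and $\lambda_2=P_aG_{aw,f}L_{aw}|\tilde h_{aw,f}|^2+\sigma_w^2$. Then a threshold $\tau^*$ minimizing $P_{e,w}(\tau)$ lies in $[\lambda_1,\lambda_2]$ if $\lambda_1<\lambda_2$ and in $[\lambda_2,\lambda_1]$ if $\lambda_1\ge\lambda_2$, and the minimum detection error is $$P_{e,w}^*=\begin{cases}0,&\lambda_1<\lambda_2,\\[2pt]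 1-\dfrac{P_aG_{aw,f}|\tilde h_{aw,f}|^2}{P_J^{\max}G_{aw,s}|\tilde h_{aw,s}|^2},&\lambda_1\ge\lambda_2.\end{cases}$$
   Context: Setting: a transmitter Alice has two antenna arrays; the first sends a covert signal with known power $P_a$, the second sends a jamming signal with power $P_J$, which is unknown to the warden Willie and uniform on $[0,P_J^{\max}]$, independently from block to block. $G_{aw,f}$ and $G_{aw,s}$ are the total directivity gains from Alice's first and second arrays to Willie, $L_{aw}$ is the path loss, $\tilde h_{aw,f},\tilde h_{aw,s}$ are fading coefficients (known to Willie and constant over a block), and $\sigma_w^2$ is Willie's noise variance. Willie uses the radiometer statistic $T_w=\frac1n\sum_{i=1}^n|\mathbf y_w(i)|^2$ compared to a threshold $\tau$; in the limit of infinite block length $n\to\infty$, $T_w$ equals $T_w^{\mathbb H_0}$ under hypothesis $\mathbb H_0$ (Alice not transmitting the covert signal) and $T_w^{\mathbb H_1}$ under $\mathbb H_1$ (Alice transmitting), as given in the claim. *)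

theory Defs
  imports "HOL-Probability.Probability"
begin

definition PJ_dist :: "real \<Rightarrow> real measure" where
  "PJ_dist PJmax = uniform_measure lborel {0..PJmax}"

definition Tw0 :: "real \<Rightarrow> real \<Rightarrow> real \<Rightarrow> real \<Rightarrow> real \<Rightarrow> real" where
  "Tw0 Gs L hs sw2 p = p * Gs * L * hs + sw2"

definition Tw1 :: "real \<Rightarrow> real \<Rightarrow> real \<Rightarrow> real \<Rightarrow> real \<Rightarrow> real \<Rightarrow> real \<Rightarrow> real \<Rightarrow> real" where
  "Tw1 Pa Gf hf Gs L hs sw2 p = Pa * Gf * L * hf + p * Gs * L * hs + sw2"

definition P_FA :: "real \<Rightarrow> real \<Rightarrow> real \<Rightarrow> real \<Rightarrow> real \<Rightarrow> real \<Rightarrow> real" where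
  "P_FA PJmax Gs L hs sw2 \<tau> =
     measure (PJ_dist PJmax) {p \<in> space (PJ_dist PJmax). Tw0 Gs L hs sw2 p > \<tau>}"

definition P_MD :: "real \<Rightarrow> real \<Rightarrow> real \<Rightarrow> real \<Rightarrow> real \<Rightarrow> real \<Rightarrow> real \<Rightarrow> real \<Rightarrow> real \<Rightarrow> real" where
  "P_MD PJmax Pa Gf hf Gs L hs sw2 \<tau> =
     measure (PJ_dist PJmax) {p \<in> space (PJ_dist PJmax). Tw1 Pa Gf hf Gs L hs sw2 p < \<tau>}"

definition P_ew :: "real \<Rightarrow> real \<Rightarrow> real \<Rightarrow> real \<Rightarrow> real \<Rightarrow> real \<Rightarrow> real \<Rightarrow> real \<Rightarrow> real \<Rightarrow> real" where
  "P_ew PJmax Pa Gf hf Gs L hs sw2 \<tau> =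
     P_FA PJmax Gs L hs sw2 \<tau> + P_MD PJmax Pa Gf hf Gs L hs sw2 \<tau>"

end

theory Submission
  imports Defs
begin

text \<open>Both statistics are increasing affine functions of the uniform jamming power, so
  \<open>T\<^sub>w\<^sup>H\<^sup>0\<close> is uniform on \<open>[\<sigma>\<^sub>w\<^sup>2, \<lambda>\<^sub>1]\<close> and \<open>T\<^sub>w\<^sup>H\<^sup>1\<close> is its translate by
  \<open>c = \<lambda>\<^sub>2 - \<sigma>\<^sub>w\<^sup>2 > 0\<close>. With \<open>F\<close> the distribution function of \<open>T\<^sub>w\<^sup>H\<^sup>0\<close>, the detection
  error is \<open>1 - F \<tau> + F (\<tau> - c)\<close>, a piecewise linear function of \<open>\<tau>\<close> that is constant,
  equal to \<open>max 0 (\<lambda>\<^sub>1 - \<lambda>\<^sub>2) / (\<lambda>\<^sub>1 - \<sigma>\<^sub>w\<^sup>2)\<close>, between \<open>\<lambda>\<^sub>1\<close> and \<open>\<lambda>\<^sub>2\<close> and strictly larger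
  outside.\<close>

definition uniform_cdf :: "real \<Rightarrow> real \<Rightarrow> real \<Rightarrow> real" where
  "uniform_cdf a b t = (min b (max a t) - a) / (b - a)"

lemma measure_uniform_Icc:
  fixes a b :: real
  assumes "a < b" and "A \<in> sets lborel"
  shows "measure (uniform_measure lborel {a..b}) A = measure lborel ({a..b} \<inter> A) / (b - a)"
  using assms by (subst measure_uniform_measure) auto

lemma measure_uniform_Icc_less:
  fixes a b t :: real
  assumes "a < b"
  shows "measure (uniform_measure lborel {a..b}) {p. p < t} = uniform_cdf a b t"
proof -
  consider "t \<le> a" | "a < t" "t \<le> b" | "b < t" by linarith
  then have "measure lborel ({a..b} \<inter> {p. p < t}) = min b (max a t) - a"
  proof cases
    case 1
    then have "{a..b} \<inter> {p. p < t} = {}" by auto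
    then show ?thesis using 1 assms by simp
  next
    case 2
    then have "{a..b} \<inter> {p. p < t} = {a..<t}" by auto
    then show ?thesis using 2 by simp
  next
    case 3
    then have "{a..b} \<inter> {p. p < t} = {a..b}" by auto
    then show ?thesis using 3 assms by simp
  qed
  then show ?thesis
    using assms by (simp add: measure_uniform_Icc uniform_cdf_def)
qed

lemma measure_uniform_Icc_greater:
  fixes a b t :: real
  assumes "a < b"
  shows "measure (uniform_measure lborel {a..b}) {p. t < p} = 1 - uniform_cdf a b t"
proof -
  consider "t < a" | "a \<le> t" "t \<le> b" | "b < t" by linarith
  then have "measure lborel ({a..b} \<inter> {p. t < p}) = b - min b (max a t)"
  proof cases
    case 1
    then have "{a..b} \<inter> {p. t < p} = {a..b}" by auto
    then show ?thesis using 1 assms by simp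
  next
    case 2
    then have "{a..b} \<inter> {p. t < p} = {t<..b}" by auto
    then show ?thesis using 2 by simp
  next
    case 3
    then have "{a..b} \<inter> {p. t < p} = {}" by auto
    then show ?thesis using 3 by simp
  qed
  then show ?thesis
    using assms by (simp add: measure_uniform_Icc uniform_cdf_def field_simps)
qed

lemma uniform_cdf_affine:
  fixes a b g s t :: real
  assumes "g > 0"
  shows "uniform_cdf a b ((t - s) / g) = uniform_cdf (g * a + s) (g * b + s) t"
  using assms by (auto simp: uniform_cdf_def min_def max_def field_simps)

lemma measure_uniform_Icc_affine_less:
  fixes a b g s t :: real
  assumes "a < b" "g > 0"
  shows "measure (uniform_measure lborel {a..b}) {p. g * p + s < t}
           = uniform_cdf (g * a + s) (g * b + s) t"
proof -
  have "{p. g * p + s < t} = {p. p < (t - s) / g}"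
    using assms by (auto simp: field_simps)
  then have "measure (uniform_measure lborel {a..b}) {p. g * p + s < t}
              = uniform_cdf a b ((t - s) / g)"
    using measure_uniform_Icc_less[OF assms(1)] by simp
  then show ?thesis
    using uniform_cdf_affine[OF assms(2)] by simp
qed

lemma measure_uniform_Icc_affine_greater:
  fixes a b g s t :: real
  assumes "a < b" "g > 0"
  shows "measure (uniform_measure lborel {a..b}) {p. t < g * p + s}
           = 1 - uniform_cdf (g * a + s) (g * b + s) t"
proof -
  have "{p. t < g * p + s} = {p. (t - s) / g < p}"
    using assms by (auto simp: field_simps)
  then have "measure (uniform_measure lborel {a..b}) {p. t < g * p + s}
              = 1 - uniform_cdf a b ((t - s) / g)"
    using measure_uniform_Icc_greater[OF assms(1)] by simp
  then show ?thesis
    using uniform_cdf_affine[OF assms(2)] by simp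
qed

lemma uniform_shift_error_eq:
  fixes a b c t :: real
  assumes "a < b"
  shows "1 - uniform_cdf a b t + uniform_cdf (a + c) (b + c) t
           = ((b - min b (max a t)) + (min (b + c) (max (a + c) t) - (a + c))) / (b - a)"
proof -
  have "1 - (x - a) / (b - a) + (y - (a + c)) / ((b + c) - (a + c))
          = ((b - x) + (y - (a + c))) / (b - a)" for x y
    using assms by (simp add: divide_simps)
  then show ?thesis
    unfolding uniform_cdf_def .
qed

lemma uniform_shift_error_ge:
  fixes a b c t :: real
  assumes "a < b" "c > 0"
  shows "max 0 (b - a - c) / (b - a) \<le> 1 - uniform_cdf a b t + uniform_cdf (a + c) (b + c) t"
proof -
  have "max 0 (b - a - c) \<le> (b - min b (max a t)) + (min (b + c) (max (a + c) t) - (a + c))"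
    using assms by (simp add: min_def max_def)
  then show ?thesis
    using assms by (simp add: uniform_shift_error_eq divide_right_mono)
qed

lemma uniform_shift_error_eq_iff:
  fixes a b c t :: real
  assumes "a < b" "c > 0"
  shows "1 - uniform_cdf a b t + uniform_cdf (a + c) (b + c) t = max 0 (b - a - c) / (b - a)
           \<longleftrightarrow> t \<in> {min b (a + c)..max b (a + c)}"
proof -
  have "(b - min b (max a t)) + (min (b + c) (max (a + c) t) - (a + c)) = max 0 (b - a - c)
          \<longleftrightarrow> t \<in> {min b (a + c)..max b (a + c)}"
    using assms by (auto simp: min_def max_def)
  then show ?thesis
    using assms by (simp add: uniform_shift_error_eq)
qed

lemma space_PJ_dist [simp]: "space (PJ_dist M) = UNIV"
  by (simp add: PJ_dist_def)

lemma P_ew_eq_uniform_cdf: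
  fixes PJmax Pa Gf hf Gs L hs sw2 \<tau> :: real
  assumes "PJmax > 0" "Gs * L * hs > 0"
  shows "P_ew PJmax Pa Gf hf Gs L hs sw2 \<tau>
           = 1 - uniform_cdf sw2 (PJmax * Gs * L * hs + sw2) \<tau>
               + uniform_cdf (sw2 + Pa * Gf * L * hf) (PJmax * Gs * L * hs + sw2 + Pa * Gf * L * hf) \<tau>"
proof -
  let ?g = "Gs * L * hs" and ?c = "Pa * Gf * L * hf"
  have "P_FA PJmax Gs L hs sw2 \<tau> = measure (PJ_dist PJmax) {p. \<tau> < ?g * p + sw2}"
    by (simp add: P_FA_def Tw0_def mult_ac)
  also have "\<dots> = 1 - uniform_cdf (?g * 0 + sw2) (?g * PJmax + sw2) \<tau>"
    unfolding PJ_dist_def using assms by (intro measure_uniform_Icc_affine_greater) auto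
  finally have FA: "P_FA PJmax Gs L hs sw2 \<tau> = 1 - uniform_cdf sw2 (PJmax * Gs * L * hs + sw2) \<tau>"
    by (simp add: mult_ac)
  have "P_MD PJmax Pa Gf hf Gs L hs sw2 \<tau> = measure (PJ_dist PJmax) {p. ?g * p + (sw2 + ?c) < \<tau>}"
    by (simp add: P_MD_def Tw1_def ac_simps)
  also have "\<dots> = uniform_cdf (?g * 0 + (sw2 + ?c)) (?g * PJmax + (sw2 + ?c)) \<tau>"
    unfolding PJ_dist_def using assms by (intro measure_uniform_Icc_affine_less) auto
  finally have MD: "P_MD PJmax Pa Gf hf Gs L hs sw2 \<tau>
                      = uniform_cdf (sw2 + ?c) (PJmax * Gs * L * hs + sw2 + ?c) \<tau>"
    by (simp add: ac_simps)
  show ?thesis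
    by (simp add: P_ew_def FA MD)
qed

theorem theorem1:
  fixes Pa PJmax Gf Gs L sw2 hf hs :: real
  assumes "Pa > 0" "PJmax > 0" "Gf > 0" "Gs > 0" "L > 0" "sw2 > 0" "hf > 0" "hs > 0"
  defines "Pe \<equiv> P_ew PJmax Pa Gf hf Gs L hs sw2"
      and "lam1 \<equiv> PJmax * Gs * L * hs + sw2"
      and "lam2 \<equiv> Pa * Gf * L * hf + sw2"
  shows "(\<exists>\<tau>s. (\<forall>\<tau>. Pe \<tau>s \<le> Pe \<tau>) \<and>
              (if lam1 < lam2 then \<tau>s \<in> {lam1..lam2} else \<tau>s \<in> {lam2..lam1}) \<and>
              Pe \<tau>s = (if lam1 < lam2 then 0
                       else 1 - (Pa * Gf * hf) / (PJmax * Gs * hs)))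
       \<and> (\<forall>\<tau>s. (\<forall>\<tau>. Pe \<tau>s \<le> Pe \<tau>) \<longrightarrow>
              (if lam1 < lam2 then \<tau>s \<in> {lam1..lam2} else \<tau>s \<in> {lam2..lam1}))"
proof -
  define c where "c = Pa * Gf * L * hf"
  define V where "V = max 0 (lam1 - sw2 - c) / (lam1 - sw2)"
  have "c > 0" "sw2 < lam1" "lam2 = sw2 + c"
    using assms by (simp_all add: c_def lam1_def lam2_def)
  have Pe: "Pe \<tau> = 1 - uniform_cdf sw2 lam1 \<tau> + uniform_cdf (sw2 + c) (lam1 + c) \<tau>" for \<tau>
    using P_ew_eq_uniform_cdf assms by (simp add: Pe_def lam1_def c_def)
  have Pe_ge: "V \<le> Pe \<tau>" for \<tau>
    using uniform_shift_error_ge[OF \<open>sw2 < lam1\<close> \<open>c > 0\<close>] by (simp add: Pe V_def)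
  have Pe_eq_V_iff: "Pe \<tau> = V \<longleftrightarrow> (if lam1 < lam2 then \<tau> \<in> {lam1..lam2} else \<tau> \<in> {lam2..lam1})" for \<tau>
    using uniform_shift_error_eq_iff[OF \<open>sw2 < lam1\<close> \<open>c > 0\<close>] \<open>lam2 = sw2 + c\<close>
    by (simp add: Pe V_def min_def max_def)
  have "c / (lam1 - sw2) = (Pa * Gf * hf) / (PJmax * Gs * hs)"
    using assms by (simp add: c_def lam1_def)
  then have V_value: "V = (if lam1 < lam2 then 0 else 1 - (Pa * Gf * hf) / (PJmax * Gs * hs))"
    using \<open>sw2 < lam1\<close> \<open>lam2 = sw2 + c\<close> by (simp add: V_def diff_divide_distrib)
  have "Pe (min lam1 lam2) = V"
    using Pe_eq_V_iff by simp
  then have minimizer_iff: "(\<forall>\<tau>. Pe \<tau>s \<le> Pe \<tau>) \<longleftrightarrow> Pe \<tau>s = V" for \<tau>s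
    using Pe_ge by (auto intro: order.antisym order.trans)
  show ?thesis
    unfolding minimizer_iff using \<open>Pe (min lam1 lam2) = V\<close> Pe_eq_V_iff V_value by auto
qed

end
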